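(* Let $\mathcal{G}$ be the set of $\mathbf{r}=(r_{12},r_{13},r_{14},r_{23},r_{24},r_{34})\in[0,\infty)^6$ with $H(\mathbf{r})\ge 0$ and $r_{ij}+r_{jk}>r_{ik}$ for all pairwise distinct $i,j,k$ (with $r_{ji}=r_{ij}$), and let $\mathcal{P}=\{\mathbf{r}\in\mathcal{G}:P(\mathbf{r})=0\}$, where $P(\mathbf{r})=r_{12}r_{34}+r_{14}r_{23}-r_{13}r_{24}$. If $\mathbf{r}\in\mathcal{P}$ then $H(\mathbf{r})=0$. Moreover $\mathcal{D}=\mathcal{M}^+\cap\mathcal{G}$, where $\mathcal{M}^+=\{\mathbf{r}\in[0,\infty)^6: I(\mathbf{r})=1,\ P(\mathbf{r})=0\}$ and $\mathcal{D}=\{\mathbf{r}\in\mathcal{G}: I(\mathbf{r})=1,\ P(\mathbf{r})=0,\ H(\mathbf{r})=0\}$.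
   Context: $H(\mathbf{r})$ is the Cayley–Menger determinant $H(\mathbf{r})=\det\begin{pmatrix}0&1&1&1&1\\1&0&r_{12}^2&r_{13}^2&r_{14}^2\\1&r_{12}^2&0&r_{23}^2&r_{24}^2\\1&r_{13}^2&r_{23}^2&0&r_{34}^2\\1&r_{14}^2&r_{24}^2&r_{34}^2&0\end{pmatrix}$ (equal to $288V^2$, $V$ the volume of the tetrahedron with these edge lengths). With masses $m_1,\dots,m_4>0$ and $M=\sum m_i$, $I(\mathbf{r})=\frac{1}{2M}\sum_{i<j}m_im_jr_{ij}^2$. *)

theory Defs
  imports "HOL-Analysis.Analysis"
begin

type_synonym cfg = "real \<times> real \<times> real \<times> real \<times> real \<times> real"

fun rd :: "cfg \<Rightarrow> nat \<Rightarrow> nat \<Rightarrow> real" where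
  "rd (r12, r13, r14, r23, r24, r34) i j =
     (if {i, j} = {1, 2} then r12 else
      if {i, j} = {1, 3} then r13 else
      if {i, j} = {1, 4} then r14 else
      if {i, j} = {2, 3} then r23 else
      if {i, j} = {2, 4} then r24 else
      if {i, j} = {3, 4} then r34 else 0)"

text \<open>Cayley--Menger matrix and determinant (rows/columns indexed 0..4).\<close>
definition CM_entry :: "cfg \<Rightarrow> nat \<Rightarrow> nat \<Rightarrow> real" where
  "CM_entry r a b = (if a = b then 0 else if a = 0 \<or> b = 0 then 1 else (rd r a b)\<^sup>2)"

definition CM :: "cfg \<Rightarrow> real^5^5" where
  "CM r = (\<chi> a b. CM_entry r (nat (Rep_bit1 a)) (nat (Rep_bit1 b)))"

definition H :: "cfg \<Rightarrow> real" where
  "H r = det (CM r)"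

definition nonneg6 :: "cfg \<Rightarrow> bool" where
  "nonneg6 r = (\<forall>i\<in>{1..4}. \<forall>j\<in>{1..4}. rd r i j \<ge> 0)"

definition P :: "cfg \<Rightarrow> real" where
  "P r = rd r 1 2 * rd r 3 4 + rd r 1 4 * rd r 2 3 - rd r 1 3 * rd r 2 4"

definition Imom :: "(nat \<Rightarrow> real) \<Rightarrow> cfg \<Rightarrow> real" where
  "Imom m r = (1 / (2 * (\<Sum>i\<in>{1..4}. m i))) *
      (\<Sum>(i,j)\<in>{(i,j). 1 \<le> i \<and> i < j \<and> j \<le> (4::nat)}. m i * m j * (rd r i j)\<^sup>2)"

definition G :: "cfg set" where
  "G = {r. nonneg6 r \<and> H r \<ge> 0 \<and>
          (\<forall>i\<in>{1..4}. \<forall>j\<in>{1..4}. \<forall>k\<in>{1..4}. i \<noteq> j \<and> j \<noteq> k \<and> i \<noteq> k \<longrightarrow>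
              rd r i j + rd r j k > rd r i k)}"

definition PP :: "cfg set" where
  "PP = {r \<in> G. P r = 0}"

definition Mplus :: "(nat \<Rightarrow> real) \<Rightarrow> cfg set" where
  "Mplus m = {r. nonneg6 r \<and> Imom m r = 1 \<and> P r = 0}"

definition DD :: "(nat \<Rightarrow> real) \<Rightarrow> cfg set" where
  "DD m = {r \<in> G. Imom m r = 1 \<and> P r = 0 \<and> H r = 0}"

end

theory Submission
  imports Defs
begin

text \<open>
  On G the face 234 is a genuine triangle, while P = 0 says that the products
  r12 r34, r13 r24, r14 r23 of opposite edges form a degenerate triangle, so Heron's
  polynomial in them vanishes. In terms of the Gram matrix of the edge vectors from vertex 4,
  whose determinant is H/8, a polynomial identity writes (squared area of face 234) times this
  Heron polynomial as a square plus a positive multiple of H r23^2 r24^2 r34^2. Hence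
  H \<le> 0 on P, so H = 0 there; and D differs from M+ \<inter> G only by the condition H = 0.
\<close>

text \<open>Sixteen times the squared area of a triangle with squared side lengths p, q, r.\<close>
definition heron :: "real \<Rightarrow> real \<Rightarrow> real \<Rightarrow> real" where
  "heron p q r = 2 * (p * q + q * r + r * p) - p\<^sup>2 - q\<^sup>2 - r\<^sup>2"

lemma heron_squares:
  "heron (x\<^sup>2) (y\<^sup>2) (z\<^sup>2) = (x + y + z) * (- x + y + z) * (x - y + z) * (x + y - z)"
  by (simp add: heron_def algebra_simps power2_eq_square)

lemma heron_squares_pos:
  fixes x y z :: real
  assumes "x < y + z" and "y < x + z" and "z < x + y"
  shows "0 < heron (x\<^sup>2) (y\<^sup>2) (z\<^sup>2)"
  unfolding heron_squares using assms by (intro mult_pos_pos) auto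

definition sym_det3 :: "real \<Rightarrow> real \<Rightarrow> real \<Rightarrow> real \<Rightarrow> real \<Rightarrow> real \<Rightarrow> real" where
  "sym_det3 a b c u v w = a * b * c + 2 * u * v * w - a * w\<^sup>2 - b * v\<^sup>2 - c * u\<^sup>2"

text \<open>
  When a, b, c, u, v, w is the Gram matrix of three edge vectors from a common vertex,
  heron is evaluated at the squared products of opposite edge lengths.
\<close>
lemma gram_heron_identity:
  fixes a b c u v w :: real
  defines "L \<equiv> (b * c - w\<^sup>2) * a + (v * w - u * c) * b + (u * w - v * b) * c"
  shows "(b * c - w\<^sup>2) * heron ((a + b - 2 * u) * c) ((a + c - 2 * v) * b) (a * (b + c - 2 * w))
    = 4 * (L\<^sup>2 + sym_det3 a b c u v w * (b * c * (b + c - 2 * w)))"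
  unfolding L_def heron_def sym_det3_def by (simp add: algebra_simps power2_eq_square)

lemma sym_det3_nonpos_if_heron_eq_0:
  fixes a b c u v w :: real
  assumes "heron ((a + b - 2 * u) * c) ((a + c - 2 * v) * b) (a * (b + c - 2 * w)) = 0"
    and "0 < b * c - w\<^sup>2" and "0 < b * c * (b + c - 2 * w)"
  shows "sym_det3 a b c u v w \<le> 0"
proof -
  define L where "L = (b * c - w\<^sup>2) * a + (v * w - u * c) * b + (u * w - v * b) * c"
  have "4 * (L\<^sup>2 + sym_det3 a b c u v w * (b * c * (b + c - 2 * w)))
      = (b * c - w\<^sup>2) * heron ((a + b - 2 * u) * c) ((a + c - 2 * v) * b) (a * (b + c - 2 * w))"
    unfolding L_def by (rule gram_heron_identity[symmetric])
  also have "\<dots> = 0"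
    using assms(1) by simp
  finally have "L\<^sup>2 + sym_det3 a b c u v w * (b * c * (b + c - 2 * w)) = 0"
    by simp
  then have "sym_det3 a b c u v w * (b * c * (b + c - 2 * w)) \<le> 0"
    using zero_le_power2[of L] by linarith
  then show ?thesis
    using assms(3) by (meson mult_pos_pos not_le)
qed

lemma UNIV_5: "(UNIV :: 5 set) = {0, 1, 2, 3, 4}"
proof -
  have "x = 0 \<or> x = 1 \<or> x = 2 \<or> x = 3 \<or> x = 4" for x :: 5
  proof (induct x)
    case (of_int z)
    then have "z = 0 \<or> z = 1 \<or> z = 2 \<or> z = 3 \<or> z = 4" by fastforce
    then show ?case by auto
  qed
  then show ?thesis by auto
qed

text \<open>The Gram matrix of the edge vectors from vertex 4, entries by the law of cosines.\<close>
lemma H_eq_gram_det: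
  "H (a, b, c, d, e, f) = 8 * sym_det3 (c\<^sup>2) (e\<^sup>2) (f\<^sup>2)
     ((c\<^sup>2 + e\<^sup>2 - a\<^sup>2) / 2) ((c\<^sup>2 + f\<^sup>2 - b\<^sup>2) / 2) ((e\<^sup>2 + f\<^sup>2 - d\<^sup>2) / 2)"
proof -
  have f1: "finite {1, 2, 3, 4::5}" "0 \<notin> {1, 2, 3, 4::5}" by auto
  have f2: "finite {2, 3, 4::5}" "1 \<notin> {2, 3, 4::5}" by auto
  have f3: "finite {3, 4::5}" "2 \<notin> {3, 4::5}" by auto
  have f4: "finite {4::5}" "3 \<notin> {4::5}" by auto
  show ?thesis
    unfolding H_def det_def UNIV_5
    unfolding sum_over_permutations_insert[OF f1] sum_over_permutations_insert[OF f2]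
      sum_over_permutations_insert[OF f3] sum_over_permutations_insert[OF f4] permutes_sing
    by (simp add: sign_swap_id permutation_swap_id permutation_compose sign_compose sign_id swap_id_eq
        CM_def CM_entry_def bit1.Rep_numeral bit1.Rep_0 bit1.Rep_1 doubleton_eq_iff
        sym_det3_def field_simps power2_eq_square)
qed

lemma H_eq_0_if_P_eq_0:
  assumes "r \<in> G" and "P r = 0"
  shows "H r = 0"
proof -
  obtain a b c d e f where r: "r = (a, b, c, d, e, f)"
    by (cases r) auto
  have "0 \<le> H r" and tri: "\<forall>i\<in>{1..4}. \<forall>j\<in>{1..4}. \<forall>k\<in>{1..4}.
      i \<noteq> j \<and> j \<noteq> k \<and> i \<noteq> k \<longrightarrow> rd r i j + rd r j k > rd r i k"
    using assms(1) by (auto simp: G_def)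
  have "d < e + f" "e < d + f" "f < d + e"
    using tri[rule_format, of 2 4 3] tri[rule_format, of 2 3 4] tri[rule_format, of 3 2 4]
    by (auto simp: r doubleton_eq_iff)
  then have face: "0 < heron (d\<^sup>2) (e\<^sup>2) (f\<^sup>2)" and "0 < d" "0 < e" "0 < f"
    using heron_squares_pos by auto
  have ptolemy: "a * f - b * e + c * d = 0"
    using assms(2) by (simp add: P_def r doubleton_eq_iff)
  have twice_half: "x + y - 2 * ((x + y - z) / 2) = z" for x y z :: real
    by (simp add: field_simps)
  have "sym_det3 (c\<^sup>2) (e\<^sup>2) (f\<^sup>2)
      ((c\<^sup>2 + e\<^sup>2 - a\<^sup>2) / 2) ((c\<^sup>2 + f\<^sup>2 - b\<^sup>2) / 2) ((e\<^sup>2 + f\<^sup>2 - d\<^sup>2) / 2) \<le> 0"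
  proof (rule sym_det3_nonpos_if_heron_eq_0, unfold twice_half)
    show "heron (a\<^sup>2 * f\<^sup>2) (b\<^sup>2 * e\<^sup>2) (c\<^sup>2 * d\<^sup>2) = 0"
      using ptolemy heron_squares[of "a * f" "b * e" "c * d"] by (simp add: power_mult_distrib)
    show "0 < e\<^sup>2 * f\<^sup>2 - ((e\<^sup>2 + f\<^sup>2 - d\<^sup>2) / 2)\<^sup>2"
      using face by (simp add: heron_def field_simps power2_eq_square)
    show "0 < e\<^sup>2 * f\<^sup>2 * d\<^sup>2"
      using \<open>0 < d\<close> \<open>0 < e\<close> \<open>0 < f\<close> by simp
  qed
  then have "H r \<le> 0"
    unfolding r H_eq_gram_det by simp
  with \<open>0 \<le> H r\<close> show ?thesis
    by simp
qed

theorem lemma1: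
  fixes m :: "nat \<Rightarrow> real"
  assumes "\<forall>i\<in>{1..4::nat}. m i > 0"
  shows "(\<forall>r\<in>PP. H r = 0) \<and> DD m = Mplus m \<inter> G"
  using H_eq_0_if_P_eq_0 by (auto simp: PP_def DD_def Mplus_def G_def)

end
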